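(* Let $T$ be a tree on $n$ vertices. Then $k(T)=2$ if and only if $T$ is a star or a balanced double star.
   Context: For a connected graph $G=(V,E)$ and $v\in V$, the status of $v$ is $s(v)=\sum_{u\in V} d(v,u)$, where $d$ is the shortest-path distance; $k(G)$ is the number of distinct status values of vertices of $G$. A star is a tree of diameter $2$, i.e. $K_{1,m}$ with $m\ge 2$. A balanced double star is a graph obtained from $K_2$ by appending $a\ge 1$ pendent vertices to each of its two vertices (the same $a$ for both). *)

theory Defs
  imports Main
begin

definition sgraph :: "'a set \<Rightarrow> ('a \<Rightarrow> 'a \<Rightarrow> bool) \<Rightarrow> bool" where
  "sgraph V E \<longleftrightarrow> finite V \<and> (\<forall>x y. E x y \<longrightarrow> x \<in> V \<and> y \<in> V \<and> x \<noteq> y \<and> E y x)"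

definition walk :: "'a set \<Rightarrow> ('a \<Rightarrow> 'a \<Rightarrow> bool) \<Rightarrow> 'a list \<Rightarrow> bool" where
  "walk V E xs \<longleftrightarrow> xs \<noteq> [] \<and> set xs \<subseteq> V \<and> (\<forall>i. Suc i < length xs \<longrightarrow> E (xs ! i) (xs ! Suc i))"

definition connected_graph :: "'a set \<Rightarrow> ('a \<Rightarrow> 'a \<Rightarrow> bool) \<Rightarrow> bool" where
  "connected_graph V E \<longleftrightarrow> (\<forall>u\<in>V. \<forall>v\<in>V. \<exists>xs. walk V E xs \<and> hd xs = u \<and> last xs = v)"

definition has_cycle :: "'a set \<Rightarrow> ('a \<Rightarrow> 'a \<Rightarrow> bool) \<Rightarrow> bool" where
  "has_cycle V E \<longleftrightarrow> (\<exists>xs. walk V E xs \<and> length xs \<ge> 3 \<and> distinct xs \<and> E (last xs) (hd xs))"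

definition is_tree :: "'a set \<Rightarrow> ('a \<Rightarrow> 'a \<Rightarrow> bool) \<Rightarrow> bool" where
  "is_tree V E \<longleftrightarrow> sgraph V E \<and> V \<noteq> {} \<and> connected_graph V E \<and> \<not> has_cycle V E"

definition gdist :: "'a set \<Rightarrow> ('a \<Rightarrow> 'a \<Rightarrow> bool) \<Rightarrow> 'a \<Rightarrow> 'a \<Rightarrow> nat" where
  "gdist V E u v = (LEAST n. \<exists>xs. walk V E xs \<and> hd xs = u \<and> last xs = v \<and> length xs = Suc n)"

definition status :: "'a set \<Rightarrow> ('a \<Rightarrow> 'a \<Rightarrow> bool) \<Rightarrow> 'a \<Rightarrow> nat" where
  "status V E v = (\<Sum>u\<in>V. gdist V E v u)"

definition num_status :: "'a set \<Rightarrow> ('a \<Rightarrow> 'a \<Rightarrow> bool) \<Rightarrow> nat" where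
  "num_status V E = card (status V E ` V)"

definition diameter :: "'a set \<Rightarrow> ('a \<Rightarrow> 'a \<Rightarrow> bool) \<Rightarrow> nat" where
  "diameter V E = Max {gdist V E u v | u v. u \<in> V \<and> v \<in> V}"

definition is_star :: "'a set \<Rightarrow> ('a \<Rightarrow> 'a \<Rightarrow> bool) \<Rightarrow> bool" where
  "is_star V E \<longleftrightarrow> is_tree V E \<and> diameter V E = 2"

definition is_balanced_double_star :: "'a set \<Rightarrow> ('a \<Rightarrow> 'a \<Rightarrow> bool) \<Rightarrow> bool" where
  "is_balanced_double_star V E \<longleftrightarrow>
     (\<exists>u v A B. u \<noteq> v \<and> finite A \<and> finite B \<and> A \<inter> B = {} \<and>
        u \<notin> A \<union> B \<and> v \<notin> A \<union> B \<and> card A = card B \<and> card A \<ge> 1 \<and>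
        V = {u, v} \<union> A \<union> B \<and>
        (\<forall>x y. E x y \<longleftrightarrow> ((x = u \<and> y = v) \<or> (x = v \<and> y = u) \<or>
                          (x = u \<and> y \<in> A) \<or> (y = u \<and> x \<in> A) \<or>
                          (x = v \<and> y \<in> B) \<or> (y = v \<and> x \<in> B))))"

end

theory Submission
  imports Defs
begin

text \<open>
  In a tree, a vertex x with two distinct neighbours a and b satisfies
  2 d(x,w) \<le> d(a,w) + d(b,w) for every w (distances of adjacent vertices differ by exactly one,
  and x cannot be farther from w than both a and b, or the two shortest paths would close a
  cycle through x). Summing over w gives 2 s(x) + 2 \<le> s(a) + s(b). If only two status values
  occur, this strict convexity forces the two inner vertices of every path with four vertices to
  share the smaller value, and rules out paths with five vertices. Hence a tree with k(T) = 2 has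
  diameter 2 (a star) or diameter 3; in the latter case every vertex is adjacent to the middle
  edge uv of a diametral path, and s(u) = s(v) makes the double star balanced. Conversely the
  statuses of stars and balanced double stars are computed directly.
\<close>

lemma walk_iff_successively:
  "walk V E xs \<longleftrightarrow> xs \<noteq> [] \<and> set xs \<subseteq> V \<and> successively E xs"
  unfolding walk_def successively_conv_nth by blast

definition shortest_walk :: "'a set \<Rightarrow> ('a \<Rightarrow> 'a \<Rightarrow> bool) \<Rightarrow> 'a \<Rightarrow> 'a \<Rightarrow> 'a list \<Rightarrow> bool" where
  "shortest_walk V E u v xs \<longleftrightarrow>
     walk V E xs \<and> hd xs = u \<and> last xs = v \<and> length xs = Suc (gdist V E u v)"

lemma gdist_le_walk:
  assumes "walk V E xs" "hd xs = u" "last xs = v"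
  shows "gdist V E u v \<le> length xs - 1"
proof -
  have "length xs = Suc (length xs - 1)"
    using assms(1) by (cases xs) (auto simp: walk_def)
  then show ?thesis
    unfolding gdist_def using assms by (intro Least_le) blast
qed

lemma shortest_walk_distinct:
  assumes "shortest_walk V E u v xs"
  shows "distinct xs"
proof (rule ccontr)
  assume "\<not> distinct xs"
  then obtain as y bs cs where xs: "xs = as @ [y] @ bs @ [y] @ cs"
    using not_distinct_decomp by blast
  define ys where "ys = as @ [y] @ cs"
  have "walk V E ys"
    using assms unfolding shortest_walk_def walk_iff_successively xs ys_def
    by (auto simp: successively_append_iff successively_Cons split: if_splits)
  moreover have "hd ys = u" "last ys = v"
    using assms unfolding shortest_walk_def xs ys_def by (cases as; cases cs; simp)+
  ultimately have "gdist V E u v \<le> length ys - 1"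
    by (rule gdist_le_walk)
  then show False
    using assms unfolding shortest_walk_def xs ys_def by simp
qed

lemma gdist_nth_shortest_walk:
  assumes "shortest_walk V E u v xs" "i < length xs"
  shows "gdist V E (xs ! i) v + i \<le> gdist V E u v"
proof -
  have "successively E (take i xs @ drop i xs)" "set (drop i xs) \<subseteq> V" "drop i xs \<noteq> []"
    using assms set_drop_subset[of i xs] unfolding shortest_walk_def walk_iff_successively by auto
  then have "walk V E (drop i xs)"
    unfolding successively_append_iff walk_iff_successively by blast
  moreover have "hd (drop i xs) = xs ! i" "last (drop i xs) = v"
    using assms unfolding shortest_walk_def by (simp_all add: hd_drop_conv_nth)
  ultimately have "gdist V E (xs ! i) v \<le> length (drop i xs) - 1"
    by (rule gdist_le_walk)
  then show ?thesis
    using assms unfolding shortest_walk_def by simp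
qed

lemma gdist_less_shortest_walk:
  assumes "shortest_walk V E u v xs" "y \<in> set xs" "y \<noteq> u"
  shows "gdist V E y v < gdist V E u v"
proof -
  obtain i where i: "i < length xs" "xs ! i = y"
    using assms(2) by (auto simp: in_set_conv_nth)
  have "xs \<noteq> []"
    using assms(1) by (auto simp: shortest_walk_def walk_def)
  then have "xs ! 0 = u"
    using assms(1) by (simp add: shortest_walk_def hd_conv_nth)
  then have "i \<noteq> 0"
    using i(2) assms(3) by metis
  then show ?thesis
    using gdist_nth_shortest_walk[OF assms(1) i(1)] i(2) by simp
qed

lemma gdist_le_shortest_walk:
  assumes "shortest_walk V E u v xs" "y \<in> set xs"
  shows "gdist V E y v \<le> gdist V E u v"
  using gdist_less_shortest_walk[OF assms] by (cases "y = u") auto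

locale connected_sgraph =
  fixes V :: "'a set" and E :: "'a \<Rightarrow> 'a \<Rightarrow> bool"
  assumes sgraph: "sgraph V E" and connected: "connected_graph V E"
begin

lemma finite_V: "finite V"
  using sgraph unfolding sgraph_def by blast

lemma adj_in_V:
  assumes "E x y"
  shows "x \<in> V" "y \<in> V"
  using sgraph assms unfolding sgraph_def by blast+

lemma adj_sym: "E x y \<Longrightarrow> E y x"
  using sgraph unfolding sgraph_def by blast

lemma adj_neq: "E x y \<Longrightarrow> x \<noteq> y"
  using sgraph unfolding sgraph_def by blast

lemma not_adj_self [simp]: "\<not> E x x"
  using adj_neq by blast

lemma shortest_walk_exists:
  assumes "u \<in> V" "v \<in> V"
  obtains xs where "shortest_walk V E u v xs"
proof -
  obtain xs where xs: "walk V E xs" "hd xs = u" "last xs = v"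
    using connected assms unfolding connected_graph_def by blast
  then have "length xs = Suc (length xs - 1)"
    by (cases xs) (auto simp: walk_def)
  then have "\<exists>n xs. walk V E xs \<and> hd xs = u \<and> last xs = v \<and> length xs = Suc n"
    using xs by blast
  then have "\<exists>xs. walk V E xs \<and> hd xs = u \<and> last xs = v \<and> length xs = Suc (gdist V E u v)"
    unfolding gdist_def by (rule LeastI_ex)
  then show ?thesis
    using that unfolding shortest_walk_def by blast
qed

lemma gdist_self [simp]: "u \<in> V \<Longrightarrow> gdist V E u u = 0"
  using gdist_le_walk[of V E "[u]" u u] by (simp add: walk_def)

lemma gdist_adj_le:
  assumes "E x y" "w \<in> V"
  shows "gdist V E x w \<le> Suc (gdist V E y w)"
proof -
  obtain xs where xs: "shortest_walk V E y w xs"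
    using shortest_walk_exists adj_in_V(2)[OF assms(1)] assms(2) by blast
  then have "xs \<noteq> []" "hd xs = y" "last xs = w" "set xs \<subseteq> V" "successively E xs"
    by (auto simp: shortest_walk_def walk_iff_successively)
  then have "walk V E (x # xs)" "hd (x # xs) = x" "last (x # xs) = w"
    using assms(1) adj_in_V(1)[OF assms(1)] by (auto simp: walk_iff_successively successively_Cons)
  then have "gdist V E x w \<le> length (x # xs) - 1"
    by (rule gdist_le_walk)
  then show ?thesis
    using xs unfolding shortest_walk_def by simp
qed

lemma gdist_le_2_cases:
  assumes "u \<in> V" "v \<in> V" "gdist V E u v \<le> 2"
  shows "u = v \<or> E u v \<or> (\<exists>z. E u z \<and> E z v)"
proof -
  obtain xs where xs: "shortest_walk V E u v xs"
    using shortest_walk_exists assms by blast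
  then have "length xs \<in> {1, 2, 3}"
    using assms(3) unfolding shortest_walk_def by auto
  then consider a where "xs = [a]" | a b where "xs = [a, b]" | a b c where "xs = [a, b, c]"
    by (auto simp: length_Suc_conv numeral_3_eq_3 numeral_2_eq_2)
  then show ?thesis
    using xs by cases (auto simp: shortest_walk_def walk_iff_successively)
qed

lemma gdist_eq_0_iff:
  assumes "u \<in> V" "v \<in> V"
  shows "gdist V E u v = 0 \<longleftrightarrow> u = v"
proof
  assume "gdist V E u v = 0"
  moreover obtain xs where "shortest_walk V E u v xs"
    using shortest_walk_exists[OF assms] .
  ultimately show "u = v"
    unfolding shortest_walk_def by (cases xs) auto
qed (use assms in simp)

lemma gdist_eq_1_iff:
  assumes "u \<in> V" "v \<in> V"
  shows "gdist V E u v = 1 \<longleftrightarrow> E u v"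
proof
  assume "gdist V E u v = 1"
  moreover obtain xs where "shortest_walk V E u v xs"
    using shortest_walk_exists[OF assms] .
  ultimately show "E u v"
    unfolding shortest_walk_def walk_iff_successively by (cases xs; cases "tl xs") auto
next
  assume e: "E u v"
  have "gdist V E u v \<le> length [u, v] - 1"
    using e assms by (intro gdist_le_walk) (auto simp: walk_iff_successively)
  then show "gdist V E u v = 1"
    using gdist_eq_0_iff[OF assms] adj_neq[OF e] by simp
qed

lemma gdist_eq_2:
  assumes "u \<in> V" "v \<in> V" "u \<noteq> v" "\<not> E u v" "E u z" "E z v"
  shows "gdist V E u v = 2"
proof -
  have "gdist V E u v \<le> length [u, z, v] - 1"
    using assms adj_in_V by (intro gdist_le_walk) (auto simp: walk_iff_successively)
  then show ?thesis
    using gdist_eq_0_iff gdist_eq_1_iff assms by fastforce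
qed

lemma shortest_path_prefix:
  assumes "u \<in> V" "w \<in> V" "n \<le> gdist V E u w"
  obtains xs where "successively E xs" "distinct xs" "length xs = Suc n" "hd xs = u"
    "\<And>y. y \<in> set xs \<Longrightarrow> y \<noteq> u \<Longrightarrow> gdist V E y w < gdist V E u w"
proof -
  obtain P where P: "shortest_walk V E u w P"
    using shortest_walk_exists assms(1,2) .
  define xs where "xs = take (Suc n) P"
  have "successively E (xs @ drop (Suc n) P)" "P \<noteq> []"
    using P by (simp_all add: shortest_walk_def walk_iff_successively xs_def)
  then have "successively E xs" "hd xs = u"
    using P unfolding successively_append_iff shortest_walk_def xs_def by simp_all
  moreover have "distinct xs" "length xs = Suc n"
    using shortest_walk_distinct[OF P] P assms(3) by (simp_all add: shortest_walk_def xs_def)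
  moreover have "gdist V E y w < gdist V E u w" if "y \<in> set xs" "y \<noteq> u" for y
    using gdist_less_shortest_walk[OF P] that in_set_takeD unfolding xs_def by metis
  ultimately show ?thesis
    using that by blast
qed

lemma gdist_le_diameter:
  assumes "u \<in> V" "v \<in> V"
  shows "gdist V E u v \<le> diameter V E"
  unfolding diameter_def using assms finite_V by (intro Max_ge finite_image_set2) auto

lemma diameter_attained:
  assumes "V \<noteq> {}"
  obtains u v where "u \<in> V" "v \<in> V" "gdist V E u v = diameter V E"
proof -
  have "diameter V E \<in> {gdist V E u v | u v. u \<in> V \<and> v \<in> V}"
    unfolding diameter_def using assms finite_V by (intro Max_in finite_image_set2) auto
  then obtain u v where "u \<in> V" "v \<in> V" "diameter V E = gdist V E u v"
    by blast
  then show ?thesis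
    using that by simp
qed

end

definition double_star :: "'a set \<Rightarrow> ('a \<Rightarrow> 'a \<Rightarrow> bool) \<Rightarrow> 'a \<Rightarrow> 'a \<Rightarrow> 'a set \<Rightarrow> 'a set \<Rightarrow> bool" where
  "double_star V E u v A B \<longleftrightarrow> u \<noteq> v \<and> finite A \<and> finite B \<and> A \<inter> B = {} \<and>
     u \<notin> A \<union> B \<and> v \<notin> A \<union> B \<and> V = {u, v} \<union> A \<union> B \<and>
     (\<forall>x y. E x y \<longleftrightarrow> ((x = u \<and> y = v) \<or> (x = v \<and> y = u) \<or>
                       (x = u \<and> y \<in> A) \<or> (y = u \<and> x \<in> A) \<or>
                       (x = v \<and> y \<in> B) \<or> (y = v \<and> x \<in> B)))"

lemma is_balanced_double_star_iff:
  "is_balanced_double_star V E \<longleftrightarrow>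
     (\<exists>u v A B. double_star V E u v A B \<and> card A = card B \<and> 1 \<le> card A)"
  unfolding is_balanced_double_star_def double_star_def
  by (rule iffI; elim exE conjE; intro exI conjI; assumption)

lemma double_star_swap: "double_star V E u v A B \<Longrightarrow> double_star V E v u B A"
  unfolding double_star_def
proof (elim conjE, intro conjI)
  assume adj: "\<forall>x y. E x y \<longleftrightarrow> ((x = u \<and> y = v) \<or> (x = v \<and> y = u) \<or>
                       (x = u \<and> y \<in> A) \<or> (y = u \<and> x \<in> A) \<or>
                       (x = v \<and> y \<in> B) \<or> (y = v \<and> x \<in> B))"
  show "\<forall>x y. E x y \<longleftrightarrow> ((x = v \<and> y = u) \<or> (x = u \<and> y = v) \<or>
                       (x = v \<and> y \<in> B) \<or> (y = v \<and> x \<in> B) \<or>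
                       (x = u \<and> y \<in> A) \<or> (y = u \<and> x \<in> A))"
  proof (intro allI)
    fix x y
    show "E x y \<longleftrightarrow> ((x = v \<and> y = u) \<or> (x = u \<and> y = v) \<or>
                       (x = v \<and> y \<in> B) \<or> (y = v \<and> x \<in> B) \<or>
                       (x = u \<and> y \<in> A) \<or> (y = u \<and> x \<in> A))"
      using adj[rule_format, of x y] by argo
  qed
qed auto

lemma sum_double_star:
  assumes "double_star V E u v A B"
  shows "sum f V = f u + f v + sum f A + sum f B"
proof -
  have "u \<noteq> v" "finite A" "finite B" "A \<inter> B = {}" "u \<notin> A \<union> B" "v \<notin> A \<union> B"
    "V = insert u (insert v (A \<union> B))"
    using assms unfolding double_star_def by auto
  then show ?thesis
    by (simp add: sum.union_disjoint add.assoc)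
qed

definition star_centred :: "'a set \<Rightarrow> ('a \<Rightarrow> 'a \<Rightarrow> bool) \<Rightarrow> 'a \<Rightarrow> bool" where
  "star_centred V E c \<longleftrightarrow>
     c \<in> V \<and> (\<forall>w\<in>V. w \<noteq> c \<longrightarrow> E w c) \<and> (\<forall>x y. E x y \<longrightarrow> x = c \<or> y = c)"

lemma double_star_adj:
  assumes "double_star V E u v A B"
  shows "E x y \<longleftrightarrow> ((x = u \<and> y = v) \<or> (x = v \<and> y = u) \<or>
                    (x = u \<and> y \<in> A) \<or> (y = u \<and> x \<in> A) \<or>
                    (x = v \<and> y \<in> B) \<or> (y = v \<and> x \<in> B))"
  using assms unfolding double_star_def by simp

lemma num_status_eq_2_iff:
  "num_status V E = 2 \<longleftrightarrow> (\<exists>p q. p \<noteq> q \<and> status V E ` V = {p, q})"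
  unfolding num_status_def card_2_iff by blast

context connected_sgraph
begin

lemma status_double_star_centre:
  assumes ds: "double_star V E u v A B"
  shows "status V E u = 1 + card A + 2 * card B"
proof -
  note adj = double_star_adj[OF ds]
  have parts: "u \<noteq> v" "u \<in> V" "v \<in> V" "A \<subseteq> V" "B \<subseteq> V" "A \<inter> B = {}"
    "u \<notin> A \<union> B" "v \<notin> A \<union> B"
    using ds unfolding double_star_def by auto
  have "gdist V E u v = 1"
    using gdist_eq_1_iff parts adj by auto
  moreover have "gdist V E u a = 1" if "a \<in> A" for a
    using gdist_eq_1_iff[of u a] parts that adj by auto
  moreover have "gdist V E u b = 2" if "b \<in> B" for b
    by (rule gdist_eq_2[of u b v]) (use parts that adj in auto)
  ultimately show ?thesis
    using parts unfolding status_def sum_double_star[OF ds] by simp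
qed

lemma status_double_star_leaf:
  assumes ds: "double_star V E u v A B" and a: "a \<in> A"
  shows "status V E a = 1 + 2 * card A + 3 * card B"
proof -
  note adj = double_star_adj[OF ds]
  have parts: "u \<noteq> v" "u \<in> V" "v \<in> V" "A \<subseteq> V" "B \<subseteq> V" "A \<inter> B = {}"
    "u \<notin> A \<union> B" "v \<notin> A \<union> B" "finite A"
    using ds unfolding double_star_def by auto
  have "gdist V E a u = 1"
    using gdist_eq_1_iff parts adj a by auto
  moreover have "gdist V E a v = 2"
    by (rule gdist_eq_2[of a v u]) (use parts a adj in auto)
  moreover have "gdist V E a a' = (if a' = a then 0 else 2)" if "a' \<in> A" for a'
    using gdist_eq_2[of a a' u] parts a that adj by auto
  moreover have "gdist V E a b = 3" if "b \<in> B" for b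
  proof -
    have "gdist V E a b \<le> length [a, u, v, b] - 1"
      using parts a that adj by (intro gdist_le_walk) (auto simp: walk_iff_successively)
    moreover have "\<not> gdist V E a b \<le> 2"
      using gdist_le_2_cases[of a b] parts a that adj by auto
    ultimately show ?thesis
      by simp
  qed
  ultimately have "status V E a = 3 + (\<Sum>a'\<in>A. if a' = a then 0 else 2) + 3 * card B"
    using parts unfolding status_def sum_double_star[OF ds] by simp
  also have "(\<Sum>a'\<in>A. if a' = a then 0 else 2 :: nat) = 2 * (card A - 1)"
    using parts(9) a by (simp add: sum.If_cases Diff_eq[symmetric])
  finally show ?thesis
    using parts(9) a by (cases "card A") auto
qed

lemma num_status_balanced_double_star:
  assumes "is_balanced_double_star V E"
  shows "num_status V E = 2"
proof -
  obtain u v A B where ds: "double_star V E u v A B" and card: "card A = card B" "1 \<le> card A"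
    using assms unfolding is_balanced_double_star_iff by blast
  then obtain a where a: "a \<in> A"
    by (metis card.empty ex_in_conv not_one_le_zero)
  have parts: "u \<in> V" "a \<in> V" "V = {u, v} \<union> A \<union> B"
    using ds a unfolding double_star_def by auto
  have "status V E x = 3 * card A + 1" if "x \<in> {u, v}" for x
    using that status_double_star_centre[OF ds] status_double_star_centre[OF double_star_swap[OF ds]]
      card by auto
  moreover have "status V E x = 5 * card A + 1" if "x \<in> A \<union> B" for x
    using that status_double_star_leaf[OF ds] status_double_star_leaf[OF double_star_swap[OF ds]]
      card by auto
  ultimately have "status V E ` V = {3 * card A + 1, 5 * card A + 1}"
    using parts a by (auto intro!: image_eqI)
  moreover have "3 * card A + 1 \<noteq> 5 * card A + 1"
    using card by simp
  ultimately show ?thesis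
    unfolding num_status_eq_2_iff by blast
qed

lemma status_star_centre:
  assumes "star_centred V E c"
  shows "status V E c = card V - 1"
proof -
  have c: "c \<in> V"
    using assms unfolding star_centred_def by blast
  moreover have "gdist V E c w = 1" if "w \<in> V - {c}" for w
    using assms that gdist_eq_1_iff[of c w] adj_sym unfolding star_centred_def by auto
  ultimately have "status V E c = gdist V E c c + (\<Sum>w\<in>V - {c}. 1)"
    unfolding status_def using finite_V by (simp add: sum.remove)
  then show ?thesis
    using c finite_V by simp
qed

lemma status_star_leaf:
  assumes star: "star_centred V E c" and l: "l \<in> V" "l \<noteq> c"
  shows "status V E l = 2 * card V - 3"
proof -
  have c: "c \<in> V" "E l c" and centre: "\<And>x y. E x y \<Longrightarrow> x = c \<or> y = c"
    using assms unfolding star_centred_def by auto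
  have "2 \<le> card V"
    using card_mono[OF finite_V, of "{l, c}"] l c(1) by simp
  have "gdist V E l w = (if w = l then 0 else if w = c then 1 else 2)" if "w \<in> V" for w
  proof -
    consider "w = l" | "w = c" | "w \<noteq> l" "w \<noteq> c" by blast
    then show ?thesis
    proof cases
      case 3
      then have "\<not> E l w" "E c w"
        using centre star that l adj_sym unfolding star_centred_def by blast+
      then show ?thesis
        using gdist_eq_2[of l w c] that l c 3 by simp
    qed (use l c gdist_eq_1_iff in auto)
  qed
  then have "status V E l = (\<Sum>w\<in>V. if w = l then 0 else if w = c then 1 else 2)"
    unfolding status_def by (rule sum.cong[OF refl])
  also have "\<dots> = 1 + 2 * (card V - 2)"
    using finite_V l c(1)
    by (simp add: sum.If_cases Diff_eq[symmetric] Int_absorb1 card_Diff_subset)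
  finally show ?thesis
    using \<open>2 \<le> card V\<close> by simp
qed

lemma num_status_star:
  assumes star: "star_centred V E c" and "3 \<le> card V"
  shows "num_status V E = 2"
proof -
  have c: "c \<in> V"
    using star unfolding star_centred_def by blast
  then have "card (V - {c}) \<noteq> 0"
    using assms(2) finite_V by (simp add: card_Diff_singleton)
  then obtain l where l: "l \<in> V" "l \<noteq> c"
    by (metis DiffE card.empty ex_in_conv insertI1)
  have "status V E ` V = {card V - 1, 2 * card V - 3}"
  proof
    show "status V E ` V \<subseteq> {card V - 1, 2 * card V - 3}"
      using status_star_centre[OF star] status_star_leaf[OF star] by auto
    show "{card V - 1, 2 * card V - 3} \<subseteq> status V E ` V"
      using status_star_centre[OF star] status_star_leaf[OF star l] c l(1)
      by (metis empty_subsetI image_eqI insert_subset)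
  qed
  moreover have "card V - 1 \<noteq> 2 * card V - 3"
    using assms(2) by simp
  ultimately show ?thesis
    unfolding num_status_eq_2_iff by blast
qed

end

lemma join_paths_at_common_end:
  assumes sym: "\<And>x y. E x y \<Longrightarrow> E y x"
    and P: "successively E P" "distinct P" "P \<noteq> []"
    and Q: "successively E Q" "distinct Q" "Q \<noteq> []"
    and ends: "last P = last Q" and heads: "hd P \<notin> set Q" "hd Q \<notin> set P"
  obtains L where "successively E L" "distinct L" "3 \<le> length L" "hd L = hd P" "last L = hd Q"
    "set L \<subseteq> set P \<union> set Q"
proof -
  have "\<exists>x\<in>set P. x \<in> set Q"
    using ends P(3) Q(3) by (metis last_in_set)
  then obtain P1 m P2 where P_split: "P = P1 @ m # P2" and m: "m \<in> set Q"
    and P1: "\<forall>y\<in>set P1. y \<notin> set Q"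
    by (rule split_list_first_propE)
  obtain Q1 Q2 where Q_split: "Q = Q1 @ m # Q2"
    using m by (meson split_list)
  have P1_ne: "P1 \<noteq> []" and Q1_ne: "Q1 \<noteq> []"
    using heads m P_split Q_split by auto
  define L where "L = P1 @ m # rev Q1"
  have "successively E P1" "E (last P1) m"
    using P(1) P1_ne unfolding P_split successively_append_iff by auto
  moreover have "successively E (m # rev Q1)"
  proof -
    have "successively E (Q1 @ [m])"
      using Q(1) Q1_ne unfolding Q_split successively_append_iff by auto
    then have "successively (\<lambda>x y. E y x) (Q1 @ [m])"
      by (rule successively_mono) (use sym in blast)
    then show ?thesis
      using successively_rev[of E "Q1 @ [m]"] by simp
  qed
  ultimately have "successively E L"
    unfolding L_def successively_append_iff by auto
  moreover have "distinct L"
    using P(2) Q(2) P1 unfolding L_def P_split Q_split by auto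
  moreover have "3 \<le> length L"
    using P1_ne Q1_ne unfolding L_def by (cases P1; cases Q1) auto
  moreover have "hd L = hd P" "last L = hd Q"
    using P1_ne Q1_ne unfolding L_def P_split Q_split by (auto simp: last_rev)
  moreover have "set L \<subseteq> set P \<union> set Q"
    unfolding L_def P_split Q_split by auto
  ultimately show ?thesis
    using that by blast
qed

context connected_sgraph
begin

lemma equidistant_path:
  assumes "p \<in> V" "q \<in> V" "p \<noteq> q" "w \<in> V" "gdist V E p w = gdist V E q w"
  obtains L where "successively E L" "distinct L" "3 \<le> length L" "hd L = p" "last L = q"
    "\<And>z. z \<in> set L \<Longrightarrow> gdist V E z w \<le> gdist V E p w"
proof -
  obtain P Q where P: "shortest_walk V E p w P" and Q: "shortest_walk V E q w Q"
    using shortest_walk_exists assms(1,2,4) by metis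
  have "q \<notin> set P" "p \<notin> set Q"
    using gdist_less_shortest_walk[OF P, of q] gdist_less_shortest_walk[OF Q, of p] assms(3,5)
    by auto
  then obtain L where "successively E L" "distinct L" "3 \<le> length L" "hd L = p" "last L = q"
    "set L \<subseteq> set P \<union> set Q"
    using join_paths_at_common_end[of E P Q] adj_sym P Q shortest_walk_distinct[OF P]
      shortest_walk_distinct[OF Q]
    by (auto simp: shortest_walk_def walk_iff_successively)
  moreover have "gdist V E z w \<le> gdist V E p w" if "z \<in> set P \<union> set Q" for z
    using that gdist_le_shortest_walk[OF P] gdist_le_shortest_walk[OF Q] assms(5) by auto
  ultimately show ?thesis
    using that by blast
qed

end

locale tree =
  fixes V :: "'a set" and E :: "'a \<Rightarrow> 'a \<Rightarrow> bool"
  assumes is_tree: "is_tree V E"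

sublocale tree \<subseteq> connected_sgraph
  using is_tree unfolding is_tree_def by unfold_locales blast+

context tree
begin

lemma V_nonempty: "V \<noteq> {}"
  using is_tree unfolding is_tree_def by blast

lemma no_cycle:
  assumes "successively E xs" "distinct xs" "3 \<le> length xs" "E (last xs) (hd xs)"
  shows False
proof -
  have "x \<in> V" if "x \<in> set xs" for x
  proof -
    obtain ys zs where xs: "xs = ys @ x # zs"
      using \<open>x \<in> set xs\<close> by (meson split_list)
    show ?thesis
    proof (cases zs)
      case Nil
      then show ?thesis
        using assms(4) adj_in_V xs by simp
    next
      case (Cons z zs')
      then have "E x z"
        using assms(1) xs by (simp add: successively_append_iff)
      then show ?thesis
        by (rule adj_in_V(1))
    qed
  qed
  then have "walk V E xs"
    using assms(1,3) by (auto simp: walk_iff_successively)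
  then have "has_cycle V E"
    unfolding has_cycle_def using assms by blast
  then show False
    using is_tree unfolding is_tree_def by blast
qed

lemma no_triangle: "E x y \<Longrightarrow> E y z \<Longrightarrow> E z x \<Longrightarrow> False"
  using no_cycle[of "[x, y, z]"] adj_neq by auto

lemma no_square: "E x y \<Longrightarrow> E y z \<Longrightarrow> E z t \<Longrightarrow> E t x \<Longrightarrow> x \<noteq> z \<Longrightarrow> y \<noteq> t \<Longrightarrow> False"
  using no_cycle[of "[x, y, z, t]"] adj_neq by auto

lemma gdist_path3_gt_2:
  assumes "E a u" "E u v" "E v b" "a \<noteq> v" "u \<noteq> b"
  shows "2 < gdist V E a b"
proof (rule ccontr)
  have "a \<noteq> b"
    using no_triangle assms by blast
  assume "\<not> 2 < gdist V E a b"
  then have "E a b \<or> (\<exists>z. E a z \<and> E z b)"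
    using gdist_le_2_cases[of a b] adj_in_V assms(1,3) \<open>a \<noteq> b\<close> by simp
  then show False
  proof (elim disjE exE conjE)
    assume "E a b"
    then show False
      using no_square[of a u v b] assms adj_sym by blast
  next
    fix z
    assume z: "E a z" "E z b"
    show False
    proof (cases "z = u \<or> z = v")
      case True
      then show False
        using no_triangle[of u v b] no_triangle[of a u v] z assms adj_sym by blast
    next
      case False
      then show False
        using no_cycle[of "[a, u, v, b, z]"] z assms \<open>a \<noteq> b\<close> adj_neq adj_sym
        by auto
    qed
  qed
qed

lemma gdist_adj_neq:
  assumes "E x y" "w \<in> V"
  shows "gdist V E x w \<noteq> gdist V E y w"
proof
  assume "gdist V E x w = gdist V E y w"
  then obtain L where "successively E L" "distinct L" "3 \<le> length L" "hd L = x" "last L = y"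
    using equidistant_path[of x y w] assms adj_in_V adj_neq by metis
  then show False
    using no_cycle adj_sym assms(1) by blast
qed

lemma gdist_common_nbr_not_farther:
  assumes "E x a" "E x b" "a \<noteq> b" "w \<in> V" "gdist V E a w = gdist V E b w"
  shows "gdist V E x w \<noteq> Suc (gdist V E a w)"
proof
  assume far: "gdist V E x w = Suc (gdist V E a w)"
  obtain L where L: "successively E L" "distinct L" "3 \<le> length L" "hd L = a" "last L = b"
    and near: "\<And>z. z \<in> set L \<Longrightarrow> gdist V E z w \<le> gdist V E a w"
    using equidistant_path[of a b w] assms adj_in_V by metis
  have "x \<notin> set L"
    using near far by fastforce
  then have "successively E (L @ [x])" "distinct (L @ [x])" "3 \<le> length (L @ [x])"
    "E (last (L @ [x])) (hd (L @ [x]))"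
    using L assms(1,2) adj_sym by (auto simp: successively_append_iff hd_append)
  then show False
    by (rule no_cycle)
qed

lemma gdist_midpoint_convex:
  assumes "E a x" "E x b" "a \<noteq> b" "w \<in> V"
  shows "2 * gdist V E x w \<le> gdist V E a w + gdist V E b w"
proof -
  have "gdist V E x w \<le> Suc (gdist V E a w)" "gdist V E x w \<le> Suc (gdist V E b w)"
    using gdist_adj_le adj_sym assms by blast+
  moreover have "gdist V E a w \<noteq> gdist V E x w" "gdist V E b w \<noteq> gdist V E x w"
    using gdist_adj_neq adj_sym assms by metis+
  moreover have "\<not> (gdist V E x w = Suc (gdist V E a w) \<and> gdist V E x w = Suc (gdist V E b w))"
    using gdist_common_nbr_not_farther[of x a b w] adj_sym assms by auto
  ultimately show ?thesis
    by linarith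
qed

lemma status_midpoint_convex:
  assumes "E a x" "E x b" "a \<noteq> b"
  shows "2 * status V E x + 2 \<le> status V E a + status V E b"
proof -
  have V: "a \<in> V" "x \<in> V" "b \<in> V"
    using assms adj_in_V by auto
  have "gdist V E a x = 1" "gdist V E b x = 1"
    using gdist_eq_1_iff V assms adj_sym by auto
  then have "status V E a + status V E b = 2 + (\<Sum>w\<in>V - {x}. gdist V E a w + gdist V E b w)"
    unfolding status_def sum.distrib[symmetric] by (simp add: sum.remove[OF finite_V V(2)])
  moreover have "2 * status V E x = (\<Sum>w\<in>V - {x}. 2 * gdist V E x w)"
    unfolding status_def sum_distrib_left by (simp add: sum.remove[OF finite_V V(2)] V(2))
  moreover have "(\<Sum>w\<in>V - {x}. 2 * gdist V E x w) \<le> (\<Sum>w\<in>V - {x}. gdist V E a w + gdist V E b w)"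
    using gdist_midpoint_convex[OF assms] by (intro sum_mono) auto
  ultimately show ?thesis
    by linarith
qed

lemma adj_centre_if_diameter_2:
  assumes diam: "diameter V E = 2" and c: "E u c" "E c w" "u \<noteq> w" and x: "x \<in> V" "x \<noteq> c"
  shows "E x c"
proof (rule ccontr)
  have cV: "c \<in> V"
    using adj_in_V c by blast
  assume "\<not> E x c"
  moreover have "gdist V E c x \<le> 2"
    using gdist_le_diameter[of c x] cV x diam by simp
  ultimately obtain y where y: "E c y" "E y x"
    using gdist_le_2_cases[of c x] cV x adj_sym by blast
  obtain z where z: "z \<in> {u, w}" "z \<noteq> y"
    using c(3) by blast
  then have "E z c" "z \<in> V"
    using c adj_sym adj_in_V by auto
  then have "2 < gdist V E z x"
    using gdist_path3_gt_2[of z c y x] z y x by blast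
  moreover have "gdist V E z x \<le> 2"
    using gdist_le_diameter[of z x] \<open>z \<in> V\<close> x diam by simp
  ultimately show False
    by simp
qed

lemma star_centred_if_is_star:
  assumes "is_star V E"
  obtains c where "star_centred V E c" "3 \<le> card V"
proof -
  have diam: "diameter V E = 2"
    using assms unfolding is_star_def by blast
  obtain u w where uw: "u \<in> V" "w \<in> V" "gdist V E u w = 2"
    using diameter_attained V_nonempty diam by metis
  then have "u \<noteq> w" "\<not> E u w"
    using gdist_eq_1_iff[OF uw(1,2)] uw by auto
  then obtain c where c: "E u c" "E c w"
    using gdist_le_2_cases[of u w] uw by auto
  have cV: "c \<in> V"
    using adj_in_V c by blast
  note hub = adj_centre_if_diameter_2[OF diam c \<open>u \<noteq> w\<close>]
  have "x = c \<or> y = c" if "E x y" for x y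
    using that hub[of x] hub[of y] no_triangle[of x y c] adj_in_V[OF that] adj_sym by blast
  then have "star_centred V E c"
    unfolding star_centred_def using hub cV by blast
  moreover have "card {u, w, c} = 3"
    using \<open>u \<noteq> w\<close> adj_neq[OF c(1)] adj_neq[OF c(2)] by auto
  then have "3 \<le> card V"
    using card_mono[OF finite_V, of "{u, w, c}"] uw cV by simp
  ultimately show ?thesis
    using that by blast
qed

lemma status_eq_middle_of_path3:
  assumes "num_status V E = 2" "E a u" "E u v" "E v b" "a \<noteq> v" "u \<noteq> b"
  shows "status V E u = status V E v"
proof -
  obtain p q where pq: "status V E ` V = {p, q}"
    using assms(1) unfolding num_status_eq_2_iff by blast
  have "a \<in> V" "u \<in> V" "v \<in> V" "b \<in> V"
    using assms(2-4) adj_in_V by auto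
  then have "status V E a \<in> {p, q}" "status V E u \<in> {p, q}" "status V E v \<in> {p, q}"
    "status V E b \<in> {p, q}"
    unfolding pq[symmetric] by simp_all
  moreover have "2 * status V E u + 2 \<le> status V E a + status V E v"
    "2 * status V E v + 2 \<le> status V E u + status V E b"
    using status_midpoint_convex assms(2-6) by blast+
  ultimately show ?thesis
    by auto
qed

lemma no_path4_if_num_status_2:
  assumes "num_status V E = 2" "E x0 x1" "E x1 x2" "E x2 x3" "E x3 x4"
    "x0 \<noteq> x2" "x1 \<noteq> x3" "x2 \<noteq> x4"
  shows False
proof -
  have "status V E x1 = status V E x2" "status V E x2 = status V E x3"
    using status_eq_middle_of_path3 assms by blast+
  moreover have "2 * status V E x2 + 2 \<le> status V E x1 + status V E x3"
    using status_midpoint_convex assms by blast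
  ultimately show False
    by simp
qed

text \<open>Otherwise b, v, u and the next two vertices of a shortest path from u to w would form
  a path with five vertices.\<close>

lemma num_status_2_gdist_not_Suc:
  assumes "num_status V E = 2" "E b v" "b \<noteq> u" "E v u" "w \<in> V" "2 \<le> gdist V E u w"
  shows "gdist V E v w \<noteq> Suc (gdist V E u w)"
proof
  assume farther: "gdist V E v w = Suc (gdist V E u w)"
  obtain xs where xs: "successively E xs" "distinct xs" "length xs = 3" "hd xs = u"
    and closer: "\<And>y. y \<in> set xs \<Longrightarrow> y \<noteq> u \<Longrightarrow> gdist V E y w < gdist V E u w"
    using shortest_path_prefix[of u w 2, simplified] adj_in_V(2)[OF assms(4)] assms(5,6) by blast
  then obtain p1 p2 where "xs = [u, p1, p2]"
    by (auto simp: length_Suc_conv numeral_3_eq_3)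
  then have "E u p1" "E p1 p2" "p1 \<noteq> u" "p2 \<noteq> u" "p1 \<noteq> v"
    using xs closer[of p1] farther by auto
  then show False
    using no_path4_if_num_status_2[of b v u p1 p2] assms by blast
qed

lemma dominating_middle_edge:
  assumes "num_status V E = 2" "E a u" "E u v" "E v b" "a \<noteq> v" "u \<noteq> b" "w \<in> V"
  shows "w = u \<or> w = v \<or> E w u \<or> E w v"
proof (rule ccontr)
  assume far: "\<not> ?thesis"
  have uV: "u \<in> V" and vV: "v \<in> V"
    using assms(3) adj_in_V by auto
  have "gdist V E u w \<noteq> 0" "gdist V E u w \<noteq> 1" "gdist V E v w \<noteq> 0" "gdist V E v w \<noteq> 1"
    using gdist_eq_0_iff[OF uV assms(7)] gdist_eq_1_iff[OF uV assms(7)]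
      gdist_eq_0_iff[OF vV assms(7)] gdist_eq_1_iff[OF vV assms(7)] far adj_sym
    by auto
  then have u2: "2 \<le> gdist V E u w" and v2: "2 \<le> gdist V E v w"
    by linarith+
  have "gdist V E u w \<noteq> gdist V E v w"
    using gdist_adj_neq assms(3,7) by blast
  moreover have "gdist V E u w \<le> Suc (gdist V E v w)" "gdist V E v w \<le> Suc (gdist V E u w)"
    using gdist_adj_le adj_sym assms(3,7) by blast+
  ultimately consider "gdist V E v w = Suc (gdist V E u w)" | "gdist V E u w = Suc (gdist V E v w)"
    by linarith
  then show False
  proof cases
    case 1
    then show False
      using num_status_2_gdist_not_Suc[OF assms(1) adj_sym[OF assms(4)] assms(6)[symmetric]
          adj_sym[OF assms(3)] assms(7) u2] by blast
  next
    case 2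
    then show False
      using num_status_2_gdist_not_Suc[OF assms(1,2,5,3,7) v2] by blast
  qed
qed

lemma double_star_if_dominating_edge:
  assumes uv: "E u v" and dom: "\<And>w. w \<in> V \<Longrightarrow> w = u \<or> w = v \<or> E w u \<or> E w v"
  shows "double_star V E u v {w \<in> V. E w u \<and> w \<noteq> v} {w \<in> V. E w v \<and> w \<noteq> u}"
    (is "double_star V E u v ?A ?B")
proof -
  have adj: "E x y \<longleftrightarrow> (x = u \<and> y = v) \<or> (x = v \<and> y = u) \<or> (x = u \<and> y \<in> ?A) \<or>
                        (y = u \<and> x \<in> ?A) \<or> (x = v \<and> y \<in> ?B) \<or> (y = v \<and> x \<in> ?B)" for x y
  proof
    assume xy: "E x y"
    show "(x = u \<and> y = v) \<or> (x = v \<and> y = u) \<or> (x = u \<and> y \<in> ?A) \<or>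
          (y = u \<and> x \<in> ?A) \<or> (x = v \<and> y \<in> ?B) \<or> (y = v \<and> x \<in> ?B)"
    proof (cases "x = u \<or> x = v \<or> y = u \<or> y = v")
      case True
      then show ?thesis
        using xy adj_sym[OF xy] adj_in_V[OF xy] by auto
    next
      case False
      then have "(E x u \<or> E x v) \<and> (E y u \<or> E y v)"
        using dom adj_in_V[OF xy] by blast
      then have False
        using no_triangle[OF xy] no_square[of x u v y] no_square[of y u v x] xy uv False
          adj_sym[of x u] adj_sym[of x v] adj_sym[of y v] adj_sym[OF xy]
        by blast
      then show ?thesis ..
    qed
  qed (use uv adj_sym in blast)
  have "?A \<inter> ?B = {}"
    using no_triangle[of _ u v] uv adj_sym by blast
  moreover have "V = {u, v} \<union> ?A \<union> ?B"
    using dom adj_in_V[OF uv] by auto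
  ultimately show ?thesis
    unfolding double_star_def using finite_V adj_neq[OF uv] by (intro conjI allI adj) auto
qed

lemma balanced_double_star_if_num_status_2:
  assumes "num_status V E = 2" "3 \<le> diameter V E"
  shows "is_balanced_double_star V E"
proof -
  obtain x y where "x \<in> V" "y \<in> V" "gdist V E x y = diameter V E"
    using diameter_attained V_nonempty by metis
  then obtain xs where xs: "successively E xs" "distinct xs" "length xs = 4"
    using shortest_path_prefix[of x y 3, simplified] assms(2) by metis
  then obtain a u v b where "xs = [a, u, v, b]"
    by (auto simp: length_Suc_conv numeral_eq_Suc)
  then have path: "E a u" "E u v" "E v b" "a \<noteq> v" "u \<noteq> b" "a \<noteq> u"
    using xs by auto
  define A where "A = {w \<in> V. E w u \<and> w \<noteq> v}"
  define B where "B = {w \<in> V. E w v \<and> w \<noteq> u}"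
  have ds: "double_star V E u v A B"
    unfolding A_def B_def
    using double_star_if_dominating_edge dominating_middle_edge[OF assms(1) path(1-5)] path(2)
    by blast
  have "status V E u = status V E v"
    using status_eq_middle_of_path3 assms(1) path by blast
  then have "card A = card B"
    using status_double_star_centre[OF ds] status_double_star_centre[OF double_star_swap[OF ds]]
    by simp
  moreover have "1 \<le> card A"
  proof -
    have "a \<in> A" "finite A"
      unfolding A_def using path adj_in_V finite_V by auto
    then show ?thesis
      by (metis One_nat_def Suc_leI card_gt_0_iff empty_iff)
  qed
  ultimately show ?thesis
    unfolding is_balanced_double_star_iff using ds by blast
qed

lemma num_status_le_1_if_diameter_le_1:
  assumes "diameter V E \<le> 1"
  shows "num_status V E \<le> 1"
proof -
  have "status V E x = card V - 1" if x: "x \<in> V" for x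
  proof -
    have "gdist V E x w = 1" if "w \<in> V - {x}" for w
    proof -
      have "gdist V E x w \<le> 1" "gdist V E x w \<noteq> 0"
        using gdist_le_diameter[of x w] gdist_eq_0_iff[of x w] assms that x by auto
      then show ?thesis
        by simp
    qed
    then show ?thesis
      unfolding status_def using finite_V x by (simp add: sum.remove)
  qed
  then have "card (status V E ` V) \<le> card {card V - 1}"
    by (intro card_mono) auto
  then show ?thesis
    unfolding num_status_def by simp
qed

end

theorem proposition3p5:
  fixes V :: "'a set" and E :: "'a \<Rightarrow> 'a \<Rightarrow> bool"
  assumes "is_tree V E"
  shows "num_status V E = 2 \<longleftrightarrow> is_star V E \<or> is_balanced_double_star V E"
proof -
  interpret tree V E
    using assms by unfold_locales
  show ?thesis
  proof
    assume two: "num_status V E = 2"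
    then consider "diameter V E \<le> 1" | "diameter V E = 2" | "3 \<le> diameter V E"
      by linarith
    then show "is_star V E \<or> is_balanced_double_star V E"
    proof cases
      case 1
      then show ?thesis
        using num_status_le_1_if_diameter_le_1 two by simp
    next
      case 2
      then show ?thesis
        using assms unfolding is_star_def by blast
    next
      case 3
      then show ?thesis
        using balanced_double_star_if_num_status_2 two by blast
    qed
  next
    assume "is_star V E \<or> is_balanced_double_star V E"
    then show "num_status V E = 2"
      using star_centred_if_is_star num_status_star num_status_balanced_double_star by metis
  qed
qed

end
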